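(* Let $q\equiv 1\pmod 4$ be a prime power. If $\psi$ is a bijection from the vertex set of a triangle $\{x,y,z\}$ of $Tr(SP_q)$ to the vertex set of a triangle $\{x',y',z'\}$ of $Tr(SP_q)$ that maps each of the three edges to an edge of the same sign, then $\psi$ extends to a (sign-preserving) automorphism of $Tr(SP_q)$.
   Context: A signified graph is a simple graph with each edge labelled positive or negative; a triangle is a set of three pairwise adjacent vertices; an automorphism is a vertex bijection mapping edges to edges of the same sign and non-edges to non-edges. Let $q\equiv 1\pmod 4$ be a prime power; for $x\in\mathbb{F}_q^*$ let $\mathrm{sq}(x)=+1$ if $x$ is a square and $-1$ otherwise. The Tromp signified Paley graph $Tr(SP_q)$ has vertex set $\{u_i : u\in\mathbb{F}_q\cup\{\infty\},\ i\in\{0,1\}\}$. For $u\ne v$ in $\mathbb{F}_q$, $u_iv_j$ is an edge of sign $\mathrm{sq}(u-v)(-1)^{i+j}$; for $v\in\mathbb{F}_q$, $\infty_iv_j$ is an edge of sign $(-1)^{i+j}$; there are no other edges. *)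

theory Defs
  imports Main
begin

text \<open>Vertices of Tr(SP_q): pairs (u, i) with u in F_q extended by infinity
  (None = infinity, Some u = u) and i in {0,1} (False = 0, True = 1).
  The finite field F_q is a type 'a of class finite field; q = CARD('a).\<close>

type_synonym 'a tvert = "'a option \<times> bool"

definition sq :: "'a::field \<Rightarrow> int" where
  "sq x = (if \<exists>y. y * y = x then 1 else -1)"

definition par_sign :: "bool \<Rightarrow> bool \<Rightarrow> int" where
  "par_sign i j = (if i = j then 1 else -1)"  \<comment> \<open>(-1)^(i+j)\<close>

fun tr_adj :: "'a::field tvert \<Rightarrow> 'a tvert \<Rightarrow> bool" where
  "tr_adj (Some u, i) (Some v, j) = (u \<noteq> v)"
| "tr_adj (None, i) (Some v, j) = True"
| "tr_adj (Some u, i) (None, j) = True"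
| "tr_adj (None, i) (None, j) = False"

fun tr_sign :: "'a::field tvert \<Rightarrow> 'a tvert \<Rightarrow> int" where
  "tr_sign (Some u, i) (Some v, j) = sq (u - v) * par_sign i j"
| "tr_sign (None, i) (Some v, j) = par_sign i j"
| "tr_sign (Some u, i) (None, j) = par_sign i j"
| "tr_sign (None, i) (None, j) = 0"

definition tr_triangle :: "'a::field tvert \<Rightarrow> 'a tvert \<Rightarrow> 'a tvert \<Rightarrow> bool" where
  "tr_triangle x y z \<longleftrightarrow> tr_adj x y \<and> tr_adj y z \<and> tr_adj x z"

definition tr_aut :: "('a::field tvert \<Rightarrow> 'a tvert) \<Rightarrow> bool" where
  "tr_aut f \<longleftrightarrow> bij f \<and>
     (\<forall>a b. tr_adj (f a) (f b) = tr_adj a b) \<and>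
     (\<forall>a b. tr_adj a b \<longrightarrow> tr_sign (f a) (f b) = tr_sign a b)"

end

theory Submission imports Defs begin

text \<open>The translations \<open>u \<mapsto> u + c\<close>, the scalings \<open>u \<mapsto> s u\<close> by nonzero squares, the swap of
  the two layers and the inversion \<open>u \<mapsto> -1/u\<close> (which swaps the layers over the non-squares)
  are automorphisms of \<open>Tr(SP\<^sub>q)\<close>. With them every triangle can be moved to the normal form
  \<open>\<infinity>\<^sub>0, 0\<^sub>j, c\<^sub>k\<close> with \<open>c\<close> equal to \<open>1\<close> or to a fixed non-square \<open>n\<close>, and the three edge
  signs of this normal form are \<open>(-1)\<^sup>j\<close>, \<open>(-1)\<^sup>k\<close> and \<open>sq(c)(-1)\<^sup>j\<^sup>+\<^sup>k\<close>, so they determine it.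
  Two triangles related by a sign-preserving bijection therefore have the same normal form,
  and composing one normalising automorphism with the inverse of the other extends the bijection.\<close>

lemma even_card_fixpoint_free_involution:
  assumes "finite A" and "\<And>x. x \<in> A \<Longrightarrow> g x \<in> A \<and> g (g x) = x \<and> g x \<noteq> x"
  shows "even (card A)"
  using assms
proof (induction "card A" arbitrary: A rule: less_induct)
  case less
  show ?case
  proof (cases "A = {}")
    case False
    then obtain x where x: "x \<in> A" by blast
    have gx: "g x \<in> A" "g x \<noteq> x" "g (g x) = x" using less.prems(2)[OF x] by auto
    let ?B = "A - {x, g x}"
    have sub: "{x, g x} \<subseteq> A" and two: "card {x, g x} = 2" using x gx by auto
    have card_B: "card ?B + 2 = card A"
      using card_mono[OF less.prems(1) sub] card_Diff_subset[OF _ sub] two by simp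
    have "even (card ?B)"
    proof (rule less.hyps)
      show "card ?B < card A" "finite ?B" using card_B less.prems(1) by auto
      fix y assume y: "y \<in> ?B"
      then have "g y \<in> A" "g (g y) = y" "g y \<noteq> y" using less.prems(2)[of y] by auto
      moreover have "g y \<noteq> x" using y \<open>g (g y) = y\<close> by auto
      moreover have "g y \<noteq> g x" using y gx(3) \<open>g (g y) = y\<close> by (metis DiffD2 insertI1)
      ultimately show "g y \<in> ?B \<and> g (g y) = y \<and> g y \<noteq> y" by auto
    qed
    then show ?thesis using card_B by presburger
  qed simp
qed

lemma sq_cases: "sq x = 1 \<or> sq x = -1"
  by (simp add: sq_def)

lemma sq_times_sq: "sq x * sq x = 1"
  by (simp add: sq_def)

lemma sq_one: "sq 1 = 1"
  by (auto simp: sq_def intro: exI[of _ 1])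

lemma sq_inverse: "sq (inverse x) = sq x"
proof -
  have "\<exists>y. y * y = inverse x" if "y * y = x" for x y :: 'a
    using that by (metis inverse_mult_distrib)
  then show ?thesis unfolding sq_def by (metis inverse_inverse_eq)
qed

lemma sq_mult_square:
  assumes "r \<noteq> 0" shows "sq (r * r * x) = sq x"
proof -
  have "(\<exists>y. y * y = r * r * x) \<longleftrightarrow> (\<exists>y. y * y = x)"
  proof
    assume "\<exists>y. y * y = r * r * x"
    then obtain y where "y * y = r * r * x" by blast
    then have "(y / r) * (y / r) = x" using assms by (simp add: field_simps)
    then show "\<exists>y. y * y = x" by blast
  next
    assume "\<exists>y. y * y = x"
    then obtain y where "y * y = x" by blast
    then have "(r * y) * (r * y) = r * r * x" by (simp add: algebra_simps)
    then show "\<exists>y. y * y = r * r * x" by blast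
  qed
  then show ?thesis by (simp add: sq_def)
qed

definition nonzero_squares :: "'a::field set" where
  "nonzero_squares = {x. x \<noteq> 0 \<and> (\<exists>y. y * y = x)}"

definition nonsquares :: "'a::field set" where
  "nonsquares = {x. \<nexists>y. y * y = x}"

lemma mem_nonsquares_iff: "x \<in> nonsquares \<longleftrightarrow> sq x = -1"
  by (simp add: nonsquares_def sq_def)

context
  assumes odd_order: "odd (card (UNIV :: 'a::{finite,field} set))"
begin

lemma two_neq_zero: "(2::'a) \<noteq> 0"
proof
  assume two: "(2::'a) = 0"
  have "even (card (UNIV :: 'a set))"
  proof (rule even_card_fixpoint_free_involution[where g = "\<lambda>x. x + 1"])
    fix x :: 'a
    have "x + 1 + 1 = x + 2" by simp
    then show "x + 1 \<in> UNIV \<and> x + 1 + 1 = x \<and> x + 1 \<noteq> x" using two by simp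
  qed simp
  then show False using odd_order by simp
qed

lemma neq_uminus:
  assumes "(x::'a) \<noteq> 0" shows "x \<noteq> - x"
proof
  assume "x = - x"
  then have "2 * x = 0" by (metis eq_neg_iff_add_eq_0 mult_2)
  then show False using assms two_neq_zero by simp
qed

lemma card_nonzero_eq_twice_nonzero_squares: "card (UNIV - {0::'a}) = 2 * card (nonzero_squares :: 'a set)"
proof -
  have "UNIV - {0::'a} = (\<Union>q\<in>nonzero_squares. {y. y * y = q})"
    unfolding nonzero_squares_def by auto
  moreover have "card (\<Union>q\<in>(nonzero_squares :: 'a set). {y. y * y = q}) =
      (\<Sum>q\<in>(nonzero_squares :: 'a set). card {y. y * y = q})"
    by (rule card_UN_disjoint) auto
  moreover have "card {y. y * y = q} = 2" if q: "q \<in> nonzero_squares" for q :: 'a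
  proof -
    obtain r where r: "r \<noteq> 0" "q = r * r" using q unfolding nonzero_squares_def by fastforce
    then have "{y. y * y = q} = {r, -r}" by (auto simp: square_eq_iff)
    then show ?thesis using neq_uminus[OF r(1)] by simp
  qed
  ultimately show ?thesis by simp
qed

lemma card_nonsquares: "card (nonsquares :: 'a set) = card (nonzero_squares :: 'a set)"
proof -
  have "UNIV - {0::'a} = nonzero_squares \<union> nonsquares" "(nonzero_squares :: 'a set) \<inter> nonsquares = {}"
    unfolding nonzero_squares_def nonsquares_def by auto
  then have "card (UNIV - {0::'a}) = card (nonzero_squares :: 'a set) + card (nonsquares :: 'a set)"
    by (simp add: card_Un_disjoint)
  then show ?thesis using card_nonzero_eq_twice_nonzero_squares by simp
qed

lemma exists_nonsquare: "\<exists>n::'a. sq n = -1"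
proof -
  have "(1::'a) \<in> nonzero_squares" unfolding nonzero_squares_def by (auto intro: exI[of _ 1])
  then have "(nonsquares :: 'a set) \<noteq> {}" using card_nonsquares by (auto simp: card_gt_0_iff)
  then show ?thesis unfolding nonsquares_def sq_def by auto
qed

text \<open>Multiplication by a non-square maps the nonzero squares injectively into the
  non-squares; as both sets have the same size, it hits every non-square.\<close>

lemma nonsquare_times_nonsquare:
  assumes a: "(a::'a) \<in> nonsquares" and b: "b \<in> nonsquares" shows "\<exists>y. y * y = a * b"
proof -
  have "a \<noteq> 0" using a unfolding nonsquares_def by force
  have into: "(\<lambda>x. a * x) ` nonzero_squares \<subseteq> nonsquares"
  proof
    fix w assume "w \<in> (\<lambda>x. a * x) ` nonzero_squares"
    then obtain r where "w = r * r * a" "r \<noteq> 0"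
      unfolding nonzero_squares_def by (fastforce simp: mult.commute)
    then show "w \<in> nonsquares" using a by (simp add: mem_nonsquares_iff sq_mult_square)
  qed
  have "card ((\<lambda>x. a * x) ` nonzero_squares) = card (nonzero_squares :: 'a set)"
    using \<open>a \<noteq> 0\<close> by (intro card_image) (auto simp: inj_on_def)
  then have "(\<lambda>x. a * x) ` nonzero_squares = nonsquares"
    using into card_nonsquares by (intro card_subset_eq) auto
  with b obtain r where "b = a * (r * r)" unfolding nonzero_squares_def by auto
  then have "(a * r) * (a * r) = a * b" by (simp add: algebra_simps)
  then show ?thesis by blast
qed

lemma sq_mult:
  assumes "a \<noteq> 0" "b \<noteq> 0" shows "sq (a * b :: 'a) = sq a * sq b"
proof (cases "sq a = 1")
  case True
  then obtain r where "a = r * r" "r \<noteq> 0" using assms(1) by (auto simp: sq_def split: if_splits)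
  then show ?thesis using True sq_mult_square by simp
next
  case a_nonsquare: False
  show ?thesis
  proof (cases "sq b = 1")
    case True
    then obtain r where "b = r * r" "r \<noteq> 0" using assms(2) by (auto simp: sq_def split: if_splits)
    then show ?thesis using True sq_mult_square by (simp add: mult.commute)
  next
    case False
    then have "sq a = -1" "sq b = -1" using a_nonsquare sq_cases by blast+
    moreover from this have "sq (a * b) = 1"
      using nonsquare_times_nonsquare by (simp add: mem_nonsquares_iff sq_def)
    ultimately show ?thesis by simp
  qed
qed

lemma sq_inverse_diff:
  assumes "u \<noteq> 0" "v \<noteq> 0" "u \<noteq> v"
  shows "sq (inverse v - inverse u :: 'a) = sq (u - v) * sq u * sq v"
proof -
  have "inverse v - inverse u = (u - v) * (inverse u * inverse v)"
    using assms(1,2) by (simp add: field_simps)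
  then show ?thesis
    using assms by (simp add: sq_mult sq_inverse)
qed

end

lemma tr_adj_iff: "tr_adj a b \<longleftrightarrow> fst a \<noteq> fst b"
  by (induction a b rule: tr_adj.induct) auto

lemma tr_autI:
  assumes "bij f"
    and "\<And>a b. fst (f a) \<noteq> fst (f b) \<longleftrightarrow> fst a \<noteq> fst b"
    and "\<And>a b. fst a \<noteq> fst b \<Longrightarrow> tr_sign (f a) (f b) = tr_sign a b"
  shows "tr_aut f"
  using assms unfolding tr_aut_def tr_adj_iff by auto

lemma tr_aut_sign: "tr_aut h \<Longrightarrow> tr_adj a b \<Longrightarrow> tr_sign (h a) (h b) = tr_sign a b"
  unfolding tr_aut_def by blast

lemma tr_aut_adj: "tr_aut h \<Longrightarrow> tr_adj (h a) (h b) \<longleftrightarrow> tr_adj a b"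
  unfolding tr_aut_def by blast

lemma tr_aut_id: "tr_aut id"
  unfolding tr_aut_def by auto

lemma tr_aut_comp:
  assumes "tr_aut f" "tr_aut g" shows "tr_aut (f \<circ> g)"
proof -
  have "bij (f \<circ> g)" using assms unfolding tr_aut_def by (blast intro: bij_comp)
  moreover have "tr_adj (f (g a)) (f (g b)) \<longleftrightarrow> tr_adj a b" for a b
    using assms by (simp add: tr_aut_adj)
  moreover have "tr_sign (f (g a)) (f (g b)) = tr_sign a b" if "tr_adj a b" for a b
    using assms that by (simp add: tr_aut_adj tr_aut_sign)
  ultimately show ?thesis unfolding tr_aut_def comp_def by blast
qed

lemma tr_aut_inv:
  assumes "tr_aut f" shows "tr_aut (inv f)"
proof -
  have "bij f" using assms unfolding tr_aut_def by auto
  then have f_inv: "f (inv f a) = a" for a by (simp add: bij_is_surj surj_f_inv_f)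
  show ?thesis
    using assms bij_imp_bij_inv[OF \<open>bij f\<close>] unfolding tr_aut_def by (metis f_inv)
qed

fun tr_shift :: "'a::field \<Rightarrow> 'a tvert \<Rightarrow> 'a tvert" where
  "tr_shift c (uo, i) = (map_option (\<lambda>u. u + c) uo, i)"

fun tr_scale :: "'a::field \<Rightarrow> 'a tvert \<Rightarrow> 'a tvert" where
  "tr_scale s (uo, i) = (map_option (\<lambda>u. s * u) uo, i)"

fun tr_swap :: "'a::field tvert \<Rightarrow> 'a tvert" where
  "tr_swap (uo, i) = (uo, \<not> i)"

fun tr_inversion :: "'a::field tvert \<Rightarrow> 'a tvert" where
  "tr_inversion (None, i) = (Some 0, i)"
| "tr_inversion (Some u, i) =
     (if u = 0 then (None, i) else (Some (- inverse u), if sq u = 1 then i else \<not> i))"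

lemma tr_aut_shift: "tr_aut (tr_shift c)"
proof (rule tr_autI)
  have "tr_shift (- c) \<circ> tr_shift c = id" "tr_shift c \<circ> tr_shift (- c) = id"
    by (auto simp: fun_eq_iff option.map_comp o_def option.map_ident)
  then show "bij (tr_shift c)" by (rule o_bij)
  fix a b :: "'a tvert"
  show "fst (tr_shift c a) \<noteq> fst (tr_shift c b) \<longleftrightarrow> fst a \<noteq> fst b"
    by (cases a; cases b; cases "fst a"; cases "fst b") auto
  show "fst a \<noteq> fst b \<Longrightarrow> tr_sign (tr_shift c a) (tr_shift c b) = tr_sign a b"
    by (induction a b rule: tr_sign.induct) auto
qed

lemma tr_aut_swap: "tr_aut tr_swap"
proof (rule tr_autI)
  show "bij (tr_swap :: 'a tvert \<Rightarrow> 'a tvert)" by (rule involuntory_imp_bij) auto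
  fix a b :: "'a tvert"
  show "fst (tr_swap a) \<noteq> fst (tr_swap b) \<longleftrightarrow> fst a \<noteq> fst b"
    by (cases a; cases b) auto
  show "fst a \<noteq> fst b \<Longrightarrow> tr_sign (tr_swap a) (tr_swap b) = tr_sign a b"
    by (induction a b rule: tr_sign.induct) (auto simp: par_sign_def)
qed

lemma tr_aut_scale:
  assumes "sq s = 1" "s \<noteq> 0" shows "tr_aut (tr_scale s)"
proof (rule tr_autI)
  have "tr_scale (inverse s) \<circ> tr_scale s = id" "tr_scale s \<circ> tr_scale (inverse s) = id"
    using \<open>s \<noteq> 0\<close>
    by (auto simp: fun_eq_iff option.map_comp o_def mult.assoc[symmetric] option.map_ident)
  then show "bij (tr_scale s)" by (rule o_bij)
  fix a b :: "'a tvert"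
  show "fst (tr_scale s a) \<noteq> fst (tr_scale s b) \<longleftrightarrow> fst a \<noteq> fst b"
    using \<open>s \<noteq> 0\<close> by (cases a; cases b; cases "fst a"; cases "fst b") auto
  obtain r where "s = r * r" "r \<noteq> 0" using assms by (auto simp: sq_def split: if_splits)
  then have "sq (s * u - s * v) = sq (u - v)" for u v
    using sq_mult_square[of r "u - v"] by (simp add: algebra_simps)
  then show "fst a \<noteq> fst b \<Longrightarrow> tr_sign (tr_scale s a) (tr_scale s b) = tr_sign a b"
    by (induction a b rule: tr_sign.induct) auto
qed

lemma par_sign_twist:
  "par_sign (if sq u = 1 then i else \<not> i) j = sq u * par_sign i j"
  "par_sign i (if sq v = 1 then j else \<not> j) = sq v * par_sign i j"
  using sq_cases[of u] sq_cases[of v] by (auto simp: par_sign_def)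

context
  assumes card_mod_4: "card (UNIV :: 'a::{finite,field} set) mod 4 = 1"
begin

lemma odd_card: "odd (card (UNIV :: 'a set))"
  using card_mod_4 by presburger

text \<open>If \<open>-1\<close> is not a square, \<open>x \<mapsto> x\<inverse>\<close> has no fixed point among the nonzero squares
  other than \<open>1\<close>, so their number \<open>(q - 1)/2\<close> would be odd.\<close>

lemma minus_one_square: "\<exists>i::'a. i * i = -1"
proof (rule ccontr)
  assume no_root: "\<nexists>i::'a. i * i = -1"
  have "even (card (nonzero_squares - {1::'a}))"
  proof (rule even_card_fixpoint_free_involution[where g = inverse])
    fix x assume x: "x \<in> nonzero_squares - {1::'a}"
    then obtain r where r: "x = r * r" "x \<noteq> 0" "x \<noteq> 1" unfolding nonzero_squares_def by force
    then have "inverse x = inverse r * inverse r" by (simp add: nonzero_inverse_mult_distrib)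
    then have "inverse x \<in> nonzero_squares" using r unfolding nonzero_squares_def by auto
    moreover have "inverse x \<noteq> x"
    proof
      assume "inverse x = x"
      then have "x * x = 1" using r(2) by (metis right_inverse)
      then show False using r no_root by (auto simp: square_eq_1_iff)
    qed
    ultimately show "inverse x \<in> nonzero_squares - {1} \<and> inverse (inverse x) = x \<and> inverse x \<noteq> x"
      using r(3) by auto
  qed simp
  moreover have "(1::'a) \<in> nonzero_squares" unfolding nonzero_squares_def by (auto intro: exI[of _ 1])
  moreover from this have "card (nonzero_squares :: 'a set) \<noteq> 0" by auto
  ultimately have "odd (card (nonzero_squares :: 'a set))"
    by (simp add: card_Diff_singleton)
  then obtain k where "card (nonzero_squares :: 'a set) = 2 * k + 1" by (blast elim: oddE)
  then have "card (UNIV - {0::'a}) = 4 * k + 2"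
    using card_nonzero_eq_twice_nonzero_squares[OF odd_card] by simp
  then have "card (UNIV :: 'a set) = 4 * k + 3" by (simp add: card_Diff_singleton)
  then show False using card_mod_4 by simp
qed

lemma sq_uminus: "sq (- x :: 'a) = sq x"
proof -
  obtain i :: 'a where i: "i * i = -1" using minus_one_square by blast
  then have "i \<noteq> 0" by auto
  then have "sq (i * i * x) = sq x" by (rule sq_mult_square)
  then show ?thesis using i by simp
qed

lemma sq_minus_inverse: "sq (- inverse x :: 'a) = sq x"
  by (simp add: sq_uminus sq_inverse)

lemma tr_inversion_involution: "tr_inversion (tr_inversion v) = (v :: 'a tvert)"
  by (induction v rule: tr_inversion.induct) (auto simp: sq_minus_inverse)

lemma tr_sign_inversion:
  assumes "fst a \<noteq> fst b"
  shows "tr_sign (tr_inversion a) (tr_inversion b) = tr_sign (a :: 'a tvert) b"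
  using assms
proof (induction a b rule: tr_sign.induct)
  case (1 u i v j)
  consider "u = 0" "v \<noteq> 0" | "u \<noteq> 0" "v = 0" | "u \<noteq> 0" "v \<noteq> 0" using 1 by auto
  then show ?case
  proof cases
    case 3
    have "sq (- inverse u - - inverse v) = sq (u - v) * sq u * sq v"
      using 1 3 sq_inverse_diff[OF odd_card] by simp
    then show ?thesis
      using 3 by (simp add: par_sign_twist sq_times_sq algebra_simps)
  qed (auto simp: par_sign_twist sq_uminus sq_inverse sq_times_sq)
qed (auto simp: par_sign_twist sq_minus_inverse sq_inverse sq_times_sq)

lemma tr_aut_inversion: "tr_aut (tr_inversion :: 'a tvert \<Rightarrow> 'a tvert)"
proof (rule tr_autI)
  show "bij (tr_inversion :: 'a tvert \<Rightarrow> 'a tvert)"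
    by (rule involuntory_imp_bij) (rule tr_inversion_involution)
  fix a b :: "'a tvert"
  show "fst (tr_inversion a) \<noteq> fst (tr_inversion b) \<longleftrightarrow> fst a \<noteq> fst b"
    by (induction a b rule: tr_sign.induct) auto
  show "fst a \<noteq> fst b \<Longrightarrow> tr_sign (tr_inversion a) (tr_inversion b) = tr_sign a b"
    by (rule tr_sign_inversion)
qed

lemma tr_aut_to_infinity: "\<exists>h. tr_aut h \<and> h v = (None, False)" for v :: "'a tvert"
proof -
  obtain h where h: "tr_aut h" "fst (h v) = None"
  proof (cases "fst v")
    case None
    then show ?thesis using that tr_aut_id by (metis id_apply)
  next
    case (Some u)
    then have "fst ((tr_inversion \<circ> tr_shift (- u)) v) = None" by (cases v) auto
    then show ?thesis using that tr_aut_comp[OF tr_aut_inversion tr_aut_shift] by blast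
  qed
  show ?thesis
  proof (cases "snd (h v)")
    case True
    then have "(tr_swap \<circ> h) v = (None, False)" using h(2) by (cases "h v") auto
    then show ?thesis using tr_aut_comp[OF tr_aut_swap h(1)] by blast
  next
    case False
    then show ?thesis using h by (metis prod.collapse)
  qed
qed

lemma square_class_representative:
  assumes "sq n = -1" "c \<noteq> 0"
  shows "\<exists>s::'a. s \<noteq> 0 \<and> sq s = 1 \<and> (s * c = 1 \<or> s * c = n)"
proof (cases "sq c = 1")
  case True
  then show ?thesis using assms(2) by (intro exI[of _ "inverse c"]) (simp add: sq_inverse)
next
  case False
  have "n \<noteq> 0" using assms(1) by (auto simp: sq_def)
  moreover have "sq (n * inverse c) = 1"
    using False sq_cases[of c] assms \<open>n \<noteq> 0\<close> by (simp add: sq_mult[OF odd_card] sq_inverse)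
  ultimately show ?thesis using assms(2) by (intro exI[of _ "n * inverse c"]) simp
qed

lemma tr_triangle_normal_form:
  assumes "sq n = -1" "tr_triangle x y (z :: 'a tvert)"
  shows "\<exists>h j k c. tr_aut h \<and> (c = 1 \<or> c = n) \<and>
           h x = (None, False) \<and> h y = (Some 0, j) \<and> h z = (Some c, k)"
proof -
  have adj: "tr_adj x y" "tr_adj y z" "tr_adj x z" using assms(2) unfolding tr_triangle_def by auto
  obtain h0 where h0: "tr_aut h0" "h0 x = (None, False)" using tr_aut_to_infinity by blast
  have "fst (h0 y) \<noteq> None" using tr_aut_adj[OF h0(1), of x y] adj h0(2) by (simp add: tr_adj_iff)
  then obtain b j where "h0 y = (Some b, j)" by (metis not_None_eq prod.collapse)
  define h1 where "h1 = tr_shift (- b) \<circ> h0"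
  have h1: "tr_aut h1" "h1 x = (None, False)" "h1 y = (Some 0, j)"
    using h0 \<open>h0 y = (Some b, j)\<close> tr_aut_comp[OF tr_aut_shift h0(1)] by (auto simp: h1_def)
  have "fst (h1 z) \<noteq> None" "fst (h1 z) \<noteq> Some 0"
    using tr_aut_adj[OF h1(1), of x z] tr_aut_adj[OF h1(1), of y z] adj h1(2,3)
    by (simp_all add: tr_adj_iff)
  then obtain c k where "h1 z = (Some c, k)" "c \<noteq> 0" by (metis not_None_eq prod.collapse)
  then obtain s where s: "s \<noteq> 0" "sq s = 1" "s * c = 1 \<or> s * c = n"
    using square_class_representative[OF assms(1)] by blast
  have "tr_aut (tr_scale s \<circ> h1)" using tr_aut_comp[OF tr_aut_scale h1(1)] s by blast
  moreover have "(tr_scale s \<circ> h1) x = (None, False)" "(tr_scale s \<circ> h1) y = (Some 0, j)"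
    "(tr_scale s \<circ> h1) z = (Some (s * c), k)"
    using h1 \<open>h1 z = (Some c, k)\<close> by auto
  ultimately show ?thesis using s(3) by blast
qed

lemma tr_sign_normal_form:
  assumes "tr_aut h" "tr_triangle x y (z :: 'a tvert)"
    and "h x = (None, False)" "h y = (Some 0, j)" "h z = (Some c, k)"
  shows "tr_sign x y = par_sign False j" "tr_sign x z = par_sign False k"
    "tr_sign y z = sq c * par_sign j k"
  using tr_aut_sign[OF assms(1), of x y] tr_aut_sign[OF assms(1), of x z]
    tr_aut_sign[OF assms(1), of y z] assms(2-)
  by (auto simp: tr_triangle_def sq_uminus)

lemma tr_triangle_canonical_form:
  assumes "sq n = -1" "tr_triangle x y (z :: 'a tvert)"
  shows "\<exists>h. tr_aut h \<and> h x = (None, False) \<and> h y = (Some 0, tr_sign x y \<noteq> 1) \<and>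
           h z = (Some (if tr_sign x y * tr_sign y z * tr_sign x z = 1 then 1 else n), tr_sign x z \<noteq> 1)"
proof -
  obtain h j k c where h: "tr_aut h" "c = 1 \<or> c = n"
    "h x = (None, False)" "h y = (Some 0, j)" "h z = (Some c, k)"
    using tr_triangle_normal_form[OF assms] by blast
  note signs = tr_sign_normal_form[OF h(1) assms(2) h(3-5)]
  have "j = (tr_sign x y \<noteq> 1)" "k = (tr_sign x z \<noteq> 1)"
    using signs by (auto simp: par_sign_def)
  moreover have "tr_sign x y * tr_sign y z * tr_sign x z = sq c"
    using signs sq_times_sq[of c] by (auto simp: par_sign_def)
  then have "(if tr_sign x y * tr_sign y z * tr_sign x z = 1 then 1 else n) = c"
    using h(2) assms(1) sq_one by auto
  ultimately show ?thesis using h by (intro exI[of _ h]) simp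
qed

end

theorem mainTheorem7:
  fixes \<psi> :: "'a::{finite,field} tvert \<Rightarrow> 'a tvert"
    and x y z x' y' z' :: "'a tvert"
  assumes "card (UNIV :: 'a set) mod 4 = 1"
    and "tr_triangle x y z"
    and "tr_triangle x' y' z'"
    and "bij_betw \<psi> {x, y, z} {x', y', z'}"
    and "\<forall>a\<in>{x, y, z}. \<forall>b\<in>{x, y, z}. tr_adj a b \<longrightarrow>
           tr_adj (\<psi> a) (\<psi> b) \<and> tr_sign (\<psi> a) (\<psi> b) = tr_sign a b"
  shows "\<exists>f. tr_aut f \<and> (\<forall>v\<in>{x, y, z}. f v = \<psi> v)"
proof -
  note q = assms(1)
  obtain n :: 'a where n: "sq n = -1" using exists_nonsquare[OF odd_card[OF q]] by blast
  have T: "tr_triangle x y z" by fact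
  then have T': "tr_triangle (\<psi> x) (\<psi> y) (\<psi> z)"
    and signs: "tr_sign (\<psi> x) (\<psi> y) = tr_sign x y" "tr_sign (\<psi> x) (\<psi> z) = tr_sign x z"
      "tr_sign (\<psi> y) (\<psi> z) = tr_sign y z"
    using assms(5) unfolding tr_triangle_def by auto
  obtain h where h: "tr_aut h" "h x = (None, False)" "h y = (Some 0, tr_sign x y \<noteq> 1)"
    "h z = (Some (if tr_sign x y * tr_sign y z * tr_sign x z = 1 then 1 else n), tr_sign x z \<noteq> 1)"
    using tr_triangle_canonical_form[OF q n T] by blast
  obtain h' where h': "tr_aut h'" "bij h'" "\<forall>v\<in>{x, y, z}. h' (\<psi> v) = h v"
    using tr_triangle_canonical_form[OF q n T'] h(2-4) signs unfolding tr_aut_def by auto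
  show ?thesis
  proof (intro exI[of _ "inv h' \<circ> h"] conjI ballI)
    show "tr_aut (inv h' \<circ> h)" using tr_aut_comp[OF tr_aut_inv[OF h'(1)] h(1)] .
    show "(inv h' \<circ> h) v = \<psi> v" if "v \<in> {x, y, z}" for v
      using h'(2,3) that by (metis bij_is_inj comp_apply inv_f_f)
  qed
qed

end
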